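(* Let $\mathcal{G}=\langle S,A,T,s_0,F\rangle$ be a two-player turn-based deterministic reachability game and let $X,Y\subseteq\mathrm{Win}_2(\mathcal{G},F)\setminus F$ with $X\cap Y=\emptyset$. Let $s\in\mathrm{Win}_2(\mathcal{G},F)$ and let $\pi_1$ be a memoryless deterministic P1 strategy in the hypergame on graph $\widehat{\mathcal{H}}_1(X,Y)$ that is sure winning for P1 (for reaching $X\cup Y$) from $s$. Then $\pi_1$ (extended arbitrarily to P1 states outside $\mathrm{Win}_2(\mathcal{G},F)$) is a stealthy deceptive sure winning strategy for P1 at $s$.
   Context: A two-player turn-based deterministic reachability game is a tuple $\mathcal{G}=\langle S,A,T,s_0,F\rangle$: $S$ finite, partitioned into P1 states $S_1$ and P2 states $S_2$; $A=A_1\cup A_2$ (P1 and P2 actions); $T:(S_1\times A_1)\cup(S_2\times A_2)\to S$ deterministic, possibly partial ($a$ enabled at $s$ iff $T(s,a)$ defined; every state has an enabled action); $s_0$ initial; $F\subseteq S$ a set of sink states (P2's goal). For a target $R\subseteq S$: $Z_0=R$, $Z_{k+1}=Z_k\cup\{s\in S_1:T(s,a)\in Z_k\ \forall\text{ enabled }a\}\cup\{s\in S_2:T(s,a)\in Z_k\text{ for some enabled }a\}$; $\mathrm{Win}_2(\mathcal{G},R)=\bigcup_kZ_k$; $\mathrm{rank}_{\mathcal{G},R}(s)=\min\{k:s\in Z_k\}$ ($\infty$ if none). For disjoint traps $X$ and fake targets $Y$: the true game $\mathcal{G}^1_{X,Y}$ has states $S$, transitions $T_{X,Y}(q,a)=T(q,a)$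 if $q\notin X\cup Y$ and $T_{X,Y}(q,a)=q$ if $q\in X\cup Y$, goal $F$; P2's perceptual game $\mathcal{G}^2_{X,Y}$ has transitions $T$ and goal $F\cup Y$, with ranks $\mathrm{rank}_{\mathcal{G}^2_{X,Y}}:=\mathrm{rank}_{\mathcal{G},F\cup Y}$. Subjectively rationalizable (sure-winning, greedy) actions: for $q\in S_2\cap\mathrm{Win}_2(\mathcal{G},F)\setminus(F\cup Y)$, $\mathsf{SRActs}_{X,Y}(q)=\{a\text{ enabled at }q:\mathrm{rank}_{\mathcal{G}^2_{X,Y}}(T(q,a))<\mathrm{rank}_{\mathcal{G}^2_{X,Y}}(q)\}$; at every other state, all enabled actions. A memoryless deterministic strategy $\pi$ of either player (a map from that player's states to enabled actions) is subjectively rationalizable if $\pi(q)\in\mathsf{SRActs}_{X,Y}(q)$ at all of that player's states. Given strategies $\pi_1,\pi_2$ and a state $s$, $\mathsf{Outcomes}(s,\pi_1,\pi_2)$ in a game is the set of paths from $s$ generated by following the strategies. A memoryless deterministic P1 strategy $\pi_1$ is stealthy deceptive sure winning at $s$ if it is subjectively rationalizable and, for every subjectively rationalizable memoryless deterministic P2 strategy $\pi_2$, every path in $\mathsf{Outcomes}(s,\pi_1,\pi_2)$ in the true game $\mathcal{G}^1_{X,Y}$ visits $X\cup Y$ within finitely many steps. The hypergame on graph $\widehat{\mathcal{H}}_1(X,Y)=\langle\mathrm{Win}_2(\mathcal{G},F),A,\widehat T_{X,Y},s_0,X\cup Y\rangle$ is the turn-based game with state set $\mathrm{Win}_2(\mathcal{G},F)$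 (inheriting the P1/P2 partition), $\widehat T_{X,Y}(q,a)=T(q,a)$ if $a\in\mathsf{SRActs}_{X,Y}(q)$ and undefined otherwise, in which P1 aims to reach $X\cup Y$ and P2 aims to avoid it; a P1 strategy is sure winning from $s$ in it if, for every P2 strategy in $\widehat{\mathcal{H}}_1(X,Y)$, every resulting path from $s$ visits $X\cup Y$ within finitely many steps. *)

theory Defs
  imports Main "HOL-Library.Extended_Nat"
begin

text \<open>States S (finite), P1 states S1 \<subseteq> S,
  P2 states S - S1.  The partial deterministic transition function is
  T :: state \<Rightarrow> action \<Rightarrow> state option; an action a is enabled at q
  iff T q a \<noteq> None.  F is a set of sink states (P2's goal).\<close>

definition game ::
  "'s set \<Rightarrow> 's set \<Rightarrow> 'a set \<Rightarrow> 'a set \<Rightarrow> ('s \<Rightarrow> 'a \<Rightarrow> 's option) \<Rightarrow> 's \<Rightarrow> 's set \<Rightarrow> bool" where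
  "game S S1 A1 A2 T s0 F \<longleftrightarrow>
     finite S \<and> S1 \<subseteq> S \<and> s0 \<in> S \<and> F \<subseteq> S \<and>
     (\<forall>q a t. T q a = Some t \<longrightarrow>
        q \<in> S \<and> t \<in> S \<and> (q \<in> S1 \<longrightarrow> a \<in> A1) \<and> (q \<in> S - S1 \<longrightarrow> a \<in> A2)) \<and>
     (\<forall>q\<in>S. \<exists>a. T q a \<noteq> None) \<and>
     (\<forall>q\<in>F. \<forall>a t. T q a = Some t \<longrightarrow> t = q)"

primrec Zset ::
  "'s set \<Rightarrow> 's set \<Rightarrow> ('s \<Rightarrow> 'a \<Rightarrow> 's option) \<Rightarrow> 's set \<Rightarrow> nat \<Rightarrow> 's set" where
  "Zset S S1 T R 0 = R"
| "Zset S S1 T R (Suc k) =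
     Zset S S1 T R k
     \<union> {q \<in> S1. \<forall>a t. T q a = Some t \<longrightarrow> t \<in> Zset S S1 T R k}
     \<union> {q \<in> S - S1. \<exists>a t. T q a = Some t \<and> t \<in> Zset S S1 T R k}"

definition Win2 :: "'s set \<Rightarrow> 's set \<Rightarrow> ('s \<Rightarrow> 'a \<Rightarrow> 's option) \<Rightarrow> 's set \<Rightarrow> 's set" where
  "Win2 S S1 T R = (\<Union>k. Zset S S1 T R k)"

definition rank :: "'s set \<Rightarrow> 's set \<Rightarrow> ('s \<Rightarrow> 'a \<Rightarrow> 's option) \<Rightarrow> 's set \<Rightarrow> 's \<Rightarrow> enat" where
  "rank S S1 T R q =
     (if \<exists>k. q \<in> Zset S S1 T R k then enat (LEAST k. q \<in> Zset S S1 T R k) else \<infinity>)"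

text \<open>Subjectively rationalizable actions; ranks are those of P2's perceptual
  game, i.e. ranks in G towards F \<union> Y.\<close>
definition SRActs ::
  "'s set \<Rightarrow> 's set \<Rightarrow> ('s \<Rightarrow> 'a \<Rightarrow> 's option) \<Rightarrow> 's set \<Rightarrow> 's set \<Rightarrow> 's set \<Rightarrow> 's \<Rightarrow> 'a set" where
  "SRActs S S1 T F X Y q =
     (if q \<in> ((S - S1) \<inter> Win2 S S1 T F) - (F \<union> Y)
      then {a. \<exists>t. T q a = Some t \<and> rank S S1 T (F \<union> Y) t < rank S S1 T (F \<union> Y) q}
      else {a. T q a \<noteq> None})"

definition Ttrue ::
  "('s \<Rightarrow> 'a \<Rightarrow> 's option) \<Rightarrow> 's set \<Rightarrow> 's set \<Rightarrow> 's \<Rightarrow> 'a \<Rightarrow> 's option" where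
  "Ttrue T X Y q a = (if q \<in> X \<union> Y then (if T q a \<noteq> None then Some q else None) else T q a)"

definition Outcomes_true ::
  "'s set \<Rightarrow> ('s \<Rightarrow> 'a \<Rightarrow> 's option) \<Rightarrow> 's set \<Rightarrow> 's set \<Rightarrow> 's \<Rightarrow> ('s \<Rightarrow> 'a) \<Rightarrow> ('s \<Rightarrow> 'a) \<Rightarrow> (nat \<Rightarrow> 's) set" where
  "Outcomes_true S1 T X Y s pi1 pi2 =
     {\<rho>. \<rho> 0 = s \<and>
          (\<forall>n. Ttrue T X Y (\<rho> n) (if \<rho> n \<in> S1 then pi1 (\<rho> n) else pi2 (\<rho> n)) = Some (\<rho> (Suc n)))}"

definition P1_strategy :: "'s set \<Rightarrow> ('s \<Rightarrow> 'a \<Rightarrow> 's option) \<Rightarrow> ('s \<Rightarrow> 'a) \<Rightarrow> bool" where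
  "P1_strategy S1 T pi1 \<longleftrightarrow> (\<forall>q\<in>S1. T q (pi1 q) \<noteq> None)"

definition P2_strategy :: "'s set \<Rightarrow> 's set \<Rightarrow> ('s \<Rightarrow> 'a \<Rightarrow> 's option) \<Rightarrow> ('s \<Rightarrow> 'a) \<Rightarrow> bool" where
  "P2_strategy S S1 T pi2 \<longleftrightarrow> (\<forall>q\<in>S - S1. T q (pi2 q) \<noteq> None)"

definition SR_P1 ::
  "'s set \<Rightarrow> 's set \<Rightarrow> ('s \<Rightarrow> 'a \<Rightarrow> 's option) \<Rightarrow> 's set \<Rightarrow> 's set \<Rightarrow> 's set \<Rightarrow> ('s \<Rightarrow> 'a) \<Rightarrow> bool" where
  "SR_P1 S S1 T F X Y pi1 \<longleftrightarrow>
     P1_strategy S1 T pi1 \<and> (\<forall>q\<in>S1. pi1 q \<in> SRActs S S1 T F X Y q)"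

definition SR_P2 ::
  "'s set \<Rightarrow> 's set \<Rightarrow> ('s \<Rightarrow> 'a \<Rightarrow> 's option) \<Rightarrow> 's set \<Rightarrow> 's set \<Rightarrow> 's set \<Rightarrow> ('s \<Rightarrow> 'a) \<Rightarrow> bool" where
  "SR_P2 S S1 T F X Y pi2 \<longleftrightarrow>
     P2_strategy S S1 T pi2 \<and> (\<forall>q\<in>S - S1. pi2 q \<in> SRActs S S1 T F X Y q)"

definition stealthy_deceptive_sure_winning ::
  "'s set \<Rightarrow> 's set \<Rightarrow> ('s \<Rightarrow> 'a \<Rightarrow> 's option) \<Rightarrow> 's set \<Rightarrow> 's set \<Rightarrow> 's set \<Rightarrow> ('s \<Rightarrow> 'a) \<Rightarrow> 's \<Rightarrow> bool" where
  "stealthy_deceptive_sure_winning S S1 T F X Y pi1 s \<longleftrightarrow>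
     SR_P1 S S1 T F X Y pi1 \<and>
     (\<forall>pi2. SR_P2 S S1 T F X Y pi2 \<longrightarrow>
        (\<forall>\<rho>\<in>Outcomes_true S1 T X Y s pi1 pi2. \<exists>n. \<rho> n \<in> X \<union> Y))"

text \<open>Hypergame on graph H1(X,Y): state set Win2(G,F), transition T(q,a) allowed iff
  a \<in> SRActs(q).  A play from s consistent with the P1 strategy pi1 is an infinite
  sequence of hypergame states in which P1 follows pi1 and P2 picks any allowed
  action (this covers every, possibly history-dependent, P2 strategy).
  pi1 is sure winning from s iff every such play visits X \<union> Y.\<close>
definition hyper_play ::
  "'s set \<Rightarrow> 's set \<Rightarrow> ('s \<Rightarrow> 'a \<Rightarrow> 's option) \<Rightarrow> 's set \<Rightarrow> 's set \<Rightarrow> 's set \<Rightarrow> ('s \<Rightarrow> 'a) \<Rightarrow> 's \<Rightarrow> (nat \<Rightarrow> 's) \<Rightarrow> bool" where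
  "hyper_play S S1 T F X Y pi1 s \<rho> \<longleftrightarrow>
     \<rho> 0 = s \<and>
     (\<forall>n. \<rho> n \<in> Win2 S S1 T F) \<and>
     (\<forall>n. \<exists>a. a \<in> SRActs S S1 T F X Y (\<rho> n) \<and> T (\<rho> n) a = Some (\<rho> (Suc n)) \<and>
               (\<rho> n \<in> S1 \<longrightarrow> a = pi1 (\<rho> n)))"

definition hyper_sure_winning ::
  "'s set \<Rightarrow> 's set \<Rightarrow> ('s \<Rightarrow> 'a \<Rightarrow> 's option) \<Rightarrow> 's set \<Rightarrow> 's set \<Rightarrow> 's set \<Rightarrow> ('s \<Rightarrow> 'a) \<Rightarrow> 's \<Rightarrow> bool" where
  "hyper_sure_winning S S1 T F X Y pi1 s \<longleftrightarrow>
     (\<forall>q\<in>S1 \<inter> Win2 S S1 T F. pi1 q \<in> SRActs S S1 T F X Y q) \<and>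
     (\<forall>\<rho>. hyper_play S S1 T F X Y pi1 s \<rho> \<longrightarrow> (\<exists>n. \<rho> n \<in> X \<union> Y))"

end

theory Submission
  imports Defs
begin

(* A play of the true game that never enters X \<union> Y follows T itself.  Against a subjectively
   rationalizable P2 it never leaves Win2(G,F): P1 moves cannot leave P2's winning region
   (F consists of sinks), and a P2 move that decreases the rank towards F \<union> Y lands in
   Win2(G, F \<union> Y), which is contained in Win2(G,F) because Y is.  Such a play is therefore
   a play of the hypergame on graph consistent with pi1, and sure winning there forces a
   visit to X \<union> Y. *)

lemma Win2I: "q \<in> Zset S S1 T R k \<Longrightarrow> q \<in> Win2 S S1 T R"
  unfolding Win2_def by blast

lemma Win2E:
  assumes "q \<in> Win2 S S1 T R" obtains k where "q \<in> Zset S S1 T R k"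
  using assms unfolding Win2_def by blast

lemma Zset_mono: "k \<le> K \<Longrightarrow> Zset S S1 T R k \<subseteq> Zset S S1 T R K"
  by (rule lift_Suc_mono_le) auto

lemma finite_subset_Win2_in_Zset:
  assumes "finite A" "A \<subseteq> Win2 S S1 T R"
  shows "\<exists>K. A \<subseteq> Zset S S1 T R K"
  using assms
proof (induction A rule: finite_induct)
  case empty
  then show ?case by blast
next
  case (insert x A)
  obtain K where K: "A \<subseteq> Zset S S1 T R K"
    using insert.IH insert.prems by blast
  obtain k where k: "x \<in> Zset S S1 T R k"
    using insert.prems by (blast elim: Win2E)
  have "A \<subseteq> Zset S S1 T R (max K k)"
    using K Zset_mono[of K "max K k" S S1 T R] by simp
  moreover have "x \<in> Zset S S1 T R (max K k)"
    using k Zset_mono[of k "max K k" S S1 T R] by auto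
  ultimately show ?case
    by blast
qed

lemma Win2_P1_if_successors_in_Win2:
  assumes "finite {t. \<exists>a. T q a = Some t}" "q \<in> S1"
    and "\<And>a t. T q a = Some t \<Longrightarrow> t \<in> Win2 S S1 T R"
  shows "q \<in> Win2 S S1 T R"
proof -
  have "{t. \<exists>a. T q a = Some t} \<subseteq> Win2 S S1 T R"
    using assms(3) by blast
  then obtain K where "{t. \<exists>a. T q a = Some t} \<subseteq> Zset S S1 T R K"
    using finite_subset_Win2_in_Zset[OF assms(1)] by blast
  then have "\<forall>a t. T q a = Some t \<longrightarrow> t \<in> Zset S S1 T R K"
    by blast
  then have "q \<in> Zset S S1 T R (Suc K)"
    using assms(2) by simp
  then show ?thesis
    by (rule Win2I)
qed

lemma Win2_P2_if_successor_in_Win2: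
  assumes "q \<in> S - S1" "T q a = Some t" "t \<in> Win2 S S1 T R"
  shows "q \<in> Win2 S S1 T R"
proof -
  obtain K where "t \<in> Zset S S1 T R K"
    using assms(3) by (rule Win2E)
  then have "q \<in> Zset S S1 T R (Suc K)"
    using assms(1,2) by auto
  then show ?thesis
    by (rule Win2I)
qed

lemma Win2_of_subset_Win2:
  assumes finitely_branching: "\<And>q. finite {t. \<exists>a. T q a = Some t}"
    and "R' \<subseteq> Win2 S S1 T R"
  shows "Win2 S S1 T R' \<subseteq> Win2 S S1 T R"
proof
  fix q assume "q \<in> Win2 S S1 T R'"
  then obtain k where "q \<in> Zset S S1 T R' k"
    by (rule Win2E)
  then show "q \<in> Win2 S S1 T R"
  proof (induction k arbitrary: q)
    case 0
    then show ?case
      using assms(2) by auto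
  next
    case (Suc k)
    consider "q \<in> Zset S S1 T R' k"
      | "q \<in> S1" "\<forall>a t. T q a = Some t \<longrightarrow> t \<in> Zset S S1 T R' k"
      | a t where "q \<in> S - S1" "T q a = Some t" "t \<in> Zset S S1 T R' k"
      using Suc.prems by auto
    then show ?case
    proof cases
      case 1
      then show ?thesis
        by (rule Suc.IH)
    next
      case 2
      show ?thesis
      proof (rule Win2_P1_if_successors_in_Win2[where T = T, OF finitely_branching 2(1)])
        fix a t assume "T q a = Some t"
        then show "t \<in> Win2 S S1 T R"
          using 2(2) Suc.IH by simp
      qed
    next
      case (3 a t)
      show ?thesis
        by (rule Win2_P2_if_successor_in_Win2[OF 3(1,2) Suc.IH[OF 3(3)]])
    qed
  qed
qed

lemma Win2_P1_successor_if_sinks: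
  assumes sinks: "\<And>q a t. q \<in> R \<Longrightarrow> T q a = Some t \<Longrightarrow> t = q"
    and "q \<in> Win2 S S1 T R" "q \<in> S1" "T q a = Some t"
  shows "t \<in> Win2 S S1 T R"
proof -
  obtain k where "q \<in> Zset S S1 T R k"
    using assms(2) by (rule Win2E)
  then show ?thesis
  proof (induction k)
    case 0
    then have "t = q"
      using sinks assms(4) by simp
    then show ?case
      using assms(2) by simp
  next
    case (Suc k)
    then have "q \<in> Zset S S1 T R k \<or> t \<in> Zset S S1 T R k"
      using assms(3,4) by auto
    then show ?case
      using Suc.IH Win2I by metis
  qed
qed

lemma rank_less_imp_Win2:
  "rank S S1 T R t < rank S S1 T R q \<Longrightarrow> t \<in> Win2 S S1 T R"
  unfolding rank_def Win2_def by (auto split: if_splits)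

lemma game_finitely_branching:
  assumes "game S S1 A1 A2 T s0 F"
  shows "finite {t. \<exists>a. T q a = Some t}"
proof (rule finite_subset)
  show "{t. \<exists>a. T q a = Some t} \<subseteq> S" "finite S"
    using assms unfolding game_def by blast+
qed

lemma Zset_subset: "R \<subseteq> S \<Longrightarrow> S1 \<subseteq> S \<Longrightarrow> Zset S S1 T R k \<subseteq> S"
  by (induction k) auto

lemma game_Win2_subset:
  assumes "game S S1 A1 A2 T s0 F"
  shows "Win2 S S1 T F \<subseteq> S"
proof
  fix q assume "q \<in> Win2 S S1 T F"
  then obtain k where "q \<in> Zset S S1 T F k"
    by (rule Win2E)
  moreover have "F \<subseteq> S" "S1 \<subseteq> S"
    using assms unfolding game_def by auto
  ultimately show "q \<in> S"
    using Zset_subset[of F S S1 T k] by blast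
qed

lemma SRActs_P1: "q \<in> S1 \<Longrightarrow> SRActs S S1 T F X Y q = {a. T q a \<noteq> None}"
  unfolding SRActs_def by simp

lemma SR_P1_iff_P1_strategy: "SR_P1 S S1 T F X Y pi1 \<longleftrightarrow> P1_strategy S1 T pi1"
  unfolding SR_P1_def P1_strategy_def by (simp add: SRActs_P1)

(* q \<notin> Y is essential: at a P2 state of Y every enabled action is rationalizable. *)
lemma SRActs_successor_in_Win2:
  assumes g: "game S S1 A1 A2 T s0 F" and "Y \<subseteq> Win2 S S1 T F"
    and q: "q \<in> Win2 S S1 T F" "q \<notin> Y"
    and "a \<in> SRActs S S1 T F X Y q" "T q a = Some t"
  shows "t \<in> Win2 S S1 T F"
proof -
  have sinks: "\<And>q a t. q \<in> F \<Longrightarrow> T q a = Some t \<Longrightarrow> t = q"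
    using g unfolding game_def by blast
  consider "q \<in> S1" | "q \<in> F" | "q \<in> (S - S1) \<inter> Win2 S S1 T F - (F \<union> Y)"
    using q game_Win2_subset[OF g] by blast
  then show ?thesis
  proof cases
    case 1
    show ?thesis
      by (rule Win2_P1_successor_if_sinks[where T = T and R = F, OF sinks q(1) 1 assms(6)])
  next
    case 2
    then show ?thesis
      using sinks q(1) assms(6) by blast
  next
    case 3
    then have "rank S S1 T (F \<union> Y) t < rank S S1 T (F \<union> Y) q"
      using assms(5,6) unfolding SRActs_def by auto
    then have "t \<in> Win2 S S1 T (F \<union> Y)"
      by (rule rank_less_imp_Win2)
    moreover have "F \<union> Y \<subseteq> Win2 S S1 T F"
      using assms(2) Win2I[where k = 0] by auto
    ultimately show ?thesis
      using Win2_of_subset_Win2 game_finitely_branching[OF g] by blast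
  qed
qed

lemma avoiding_true_outcome_is_hyper_play:
  assumes g: "game S S1 A1 A2 T s0 F" and "Y \<subseteq> Win2 S S1 T F" and "s \<in> Win2 S S1 T F"
    and "P1_strategy S1 T pi1" and "SR_P2 S S1 T F X Y pi2"
    and \<rho>: "\<rho> \<in> Outcomes_true S1 T X Y s pi1 pi2" and avoid: "\<And>n. \<rho> n \<notin> X \<union> Y"
  shows "hyper_play S S1 T F X Y pi1 s \<rho>"
proof -
  define act where "act n = (if \<rho> n \<in> S1 then pi1 (\<rho> n) else pi2 (\<rho> n))" for n
  have step: "T (\<rho> n) (act n) = Some (\<rho> (Suc n))" for n
  proof -
    have "Ttrue T X Y (\<rho> n) (act n) = Some (\<rho> (Suc n))"
      using \<rho> unfolding Outcomes_true_def act_def by blast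
    then show ?thesis
      using avoid[of n] unfolding Ttrue_def by simp
  qed
  then have "\<rho> n \<in> S" for n
    using g unfolding game_def by blast
  then have SR: "act n \<in> SRActs S S1 T F X Y (\<rho> n)" for n
    using assms(4,5) step[of n]
    unfolding act_def SR_P2_def P1_strategy_def by (auto simp: SRActs_P1)
  have Win: "\<rho> n \<in> Win2 S S1 T F" for n
  proof (induction n)
    case 0
    show ?case
      using \<rho> assms(3) unfolding Outcomes_true_def by simp
  next
    case (Suc n)
    then show ?case
      using SRActs_successor_in_Win2[OF g assms(2) _ _ SR step] avoid by blast
  qed
  show ?thesis
    unfolding hyper_play_def
    using \<rho> Win SR step unfolding Outcomes_true_def act_def by fastforce
qed

theorem theorem1:
  fixes S S1 :: "'s set" and A1 A2 :: "'a set"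
    and T :: "'s \<Rightarrow> 'a \<Rightarrow> 's option" and s0 s :: 's and F X Y :: "'s set"
    and pi1 :: "'s \<Rightarrow> 'a"
  assumes "game S S1 A1 A2 T s0 F"
    and "X \<subseteq> Win2 S S1 T F - F" and "Y \<subseteq> Win2 S S1 T F - F" and "X \<inter> Y = {}"
    and "s \<in> Win2 S S1 T F"
    and "P1_strategy S1 T pi1"
    and "hyper_sure_winning S S1 T F X Y pi1 s"
  shows "stealthy_deceptive_sure_winning S S1 T F X Y pi1 s"
proof -
  have "Y \<subseteq> Win2 S S1 T F"
    using assms(3) by blast
  have "\<exists>n. \<rho> n \<in> X \<union> Y"
    if "SR_P2 S S1 T F X Y pi2" and "\<rho> \<in> Outcomes_true S1 T X Y s pi1 pi2" for pi2 \<rho>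
  proof (rule ccontr)
    assume "\<nexists>n. \<rho> n \<in> X \<union> Y"
    then have avoid: "\<And>n. \<rho> n \<notin> X \<union> Y"
      by blast
    have "hyper_play S S1 T F X Y pi1 s \<rho>"
      by (rule avoiding_true_outcome_is_hyper_play
          [OF assms(1) \<open>Y \<subseteq> Win2 S S1 T F\<close> assms(5,6) that avoid])
    then show False
      using assms(7) avoid unfolding hyper_sure_winning_def by blast
  qed
  then show ?thesis
    unfolding stealthy_deceptive_sure_winning_def SR_P1_iff_P1_strategy
    using assms(6) by blast
qed

end
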